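(* For $\phi\in L^\infty$, the slant H-Toeplitz operator $V_\phi$ is self-adjoint if and only if $\phi=0$.
   Context: $L^2=L^2(\mathbb{T})$ with orthonormal basis $e_n(z)=z^n$, $n\in\mathbb{Z}$; $H^2$ is the closed span of $\{e_n\}_{n\ge0}$, $P:L^2\to H^2$ the orthogonal projection, $M_\phi$ multiplication by $\phi$. $W:L^2\to L^2$: $We_n=e_{n/2}$ for $n$ even, $0$ for $n$ odd. $K:H^2\to L^2$: $Ke_{2n}=e_n$, $Ke_{2n+1}=e_{-n-1}$ ($n\ge0$). The slant H-Toeplitz operator is $V_\phi=WPM_\phi K:H^2\to H^2$. *)

theory Defs
  imports "HOL-Analysis.Analysis"
begin

text \<open>Functions on the unit circle are given as functions phi :: complex => complex,
  evaluated at cis t, t in [0, 2 pi], with normalized arc-length measure.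
  L^2(T) is identified with l^2(Z) via the orthonormal basis e_n(z) = z^n:
  an element of L^2 is represented by its sequence of coefficients.\<close>

definition Linf :: "(complex \<Rightarrow> complex) \<Rightarrow> bool" where
  "Linf phi \<longleftrightarrow> phi \<in> borel_measurable borel \<and>
     (\<exists>C. AE t in lborel. t \<in> {0..2*pi} \<longrightarrow> norm (phi (cis t)) \<le> C)"

definition fourier :: "(complex \<Rightarrow> complex) \<Rightarrow> int \<Rightarrow> complex" where
  "fourier phi n = complex_of_real (1 / (2*pi)) *
     (LINT t:{0..2*pi}|lborel. phi (cis t) * cnj (cis t powi n))"

definition l2 :: "(int \<Rightarrow> complex) set" where
  "l2 = {f. (\<lambda>n. (cmod (f n))\<^sup>2) summable_on UNIV}"

definition H2 :: "(int \<Rightarrow> complex) set" where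
  "H2 = {f \<in> l2. \<forall>n<0. f n = 0}"

definition l2_inner :: "(int \<Rightarrow> complex) \<Rightarrow> (int \<Rightarrow> complex) \<Rightarrow> complex" where
  "l2_inner f g = (\<Sum>\<^sub>\<infinity>n. f n * cnj (g n))"

definition Mult :: "(complex \<Rightarrow> complex) \<Rightarrow> (int \<Rightarrow> complex) \<Rightarrow> (int \<Rightarrow> complex)" where
  "Mult phi f = (\<lambda>n. \<Sum>\<^sub>\<infinity>m. fourier phi (n - m) * f m)"

definition Proj :: "(int \<Rightarrow> complex) \<Rightarrow> (int \<Rightarrow> complex)" where
  "Proj f = (\<lambda>n. if n \<ge> 0 then f n else 0)"

text \<open>W e_n = e_(n/2) for n even, 0 for n odd.\<close>
definition Wop :: "(int \<Rightarrow> complex) \<Rightarrow> (int \<Rightarrow> complex)" where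
  "Wop f = (\<lambda>m. f (2 * m))"

text \<open>K e_(2n) = e_n, K e_(2n+1) = e_(-n-1) for n >= 0.\<close>
definition Kop :: "(int \<Rightarrow> complex) \<Rightarrow> (int \<Rightarrow> complex)" where
  "Kop f = (\<lambda>m. if m \<ge> 0 then f (2 * m) else f (- 2 * m - 1))"

definition slant_HT :: "(complex \<Rightarrow> complex) \<Rightarrow> (int \<Rightarrow> complex) \<Rightarrow> (int \<Rightarrow> complex)" where
  "slant_HT phi f = Wop (Proj (Mult phi (Kop f)))"

definition selfadjoint_on_H2 :: "((int \<Rightarrow> complex) \<Rightarrow> (int \<Rightarrow> complex)) \<Rightarrow> bool" where
  "selfadjoint_on_H2 T \<longleftrightarrow> (\<forall>f\<in>H2. \<forall>g\<in>H2. l2_inner (T f) g = l2_inner f (T g))"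

end

(*
  Write phi^(k) for the k-th Fourier coefficient of phi. Testing self-adjointness of V_phi
  on the basis vectors e_(2n), which V_phi maps to sum_(i >= 0) phi^(2i - n) e_i, gives
  phi^(4m - n) = cnj (phi^(4n - m)) for all m, n >= 0. With n = 4m - k this says
  |phi^(k)| = |phi^(15m - 4k)| for every large m, so each value |phi^(k)| is taken by
  infinitely many Fourier coefficients; since their squares are summable (Bessel's
  inequality), all Fourier coefficients vanish. A bounded function whose Fourier coefficients
  vanish is orthogonal to all trigonometric polynomials, hence (Stone-Weierstrass) to all
  continuous functions, hence (dominated convergence) to the indicators of open sets, hence
  (Dynkin) to those of all Borel sets, so it is zero almost everywhere.
  Conversely, if phi = 0 a.e. then V_phi = 0.
*)
theory Submission
  imports Defs
begin

section \<open>Measurability and essential boundedness\<close>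

lemma borel_measurable_cnj [measurable (raw)]:
  "f \<in> borel_measurable M \<Longrightarrow> (\<lambda>x. cnj (f x)) \<in> borel_measurable M"
  by (rule borel_measurable_continuous_on[OF continuous_on_cnj[OF continuous_on_id]])

lemma borel_measurable_power_int [measurable (raw)]:
  fixes f :: "'a \<Rightarrow> 'b::real_normed_field"
  assumes [measurable]: "f \<in> borel_measurable M"
  shows "(\<lambda>x. f x powi n) \<in> borel_measurable M"
  by (cases "0 \<le> n") (simp_all add: power_int_def borel_measurable_power borel_measurable_inverse)

definition ess_bounded :: "'a measure \<Rightarrow> ('a \<Rightarrow> 'b::real_normed_vector) \<Rightarrow> bool" where
  "ess_bounded M f \<longleftrightarrow> f \<in> borel_measurable M \<and> (\<exists>B. AE x in M. norm (f x) \<le> B)"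

lemma ess_bounded_const: "ess_bounded M (\<lambda>_. c)"
  unfolding ess_bounded_def by auto

lemma ess_bounded_add:
  fixes f g :: "'a \<Rightarrow> 'b::{real_normed_vector, second_countable_topology}"
  assumes "ess_bounded M f" "ess_bounded M g"
  shows "ess_bounded M (\<lambda>x. f x + g x)"
proof -
  obtain A B where "AE x in M. norm (f x) \<le> A" "AE x in M. norm (g x) \<le> B"
    using assms unfolding ess_bounded_def by blast
  then have "AE x in M. norm (f x + g x) \<le> A + B"
    by eventually_elim (meson add_mono norm_triangle_ineq order_trans)
  with assms show ?thesis unfolding ess_bounded_def by auto
qed

lemma ess_bounded_diff:
  fixes f g :: "'a \<Rightarrow> 'b::{real_normed_vector, second_countable_topology}"
  assumes "ess_bounded M f" "ess_bounded M g"
  shows "ess_bounded M (\<lambda>x. f x - g x)"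
proof -
  obtain A B where "AE x in M. norm (f x) \<le> A" "AE x in M. norm (g x) \<le> B"
    using assms unfolding ess_bounded_def by blast
  then have "AE x in M. norm (f x - g x) \<le> A + B"
    by eventually_elim (meson add_mono norm_triangle_ineq4 order_trans)
  with assms show ?thesis unfolding ess_bounded_def by auto
qed

lemma ess_bounded_mult:
  fixes f g :: "'a \<Rightarrow> 'b::{real_normed_algebra, second_countable_topology}"
  assumes "ess_bounded M f" "ess_bounded M g"
  shows "ess_bounded M (\<lambda>x. f x * g x)"
proof -
  obtain A B where "AE x in M. norm (f x) \<le> A" "AE x in M. norm (g x) \<le> B"
    using assms unfolding ess_bounded_def by blast
  then have "AE x in M. norm (f x * g x) \<le> A * B"
    by eventually_elim (meson norm_mult_ineq mult_mono' norm_ge_zero order_trans)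
  with assms show ?thesis unfolding ess_bounded_def by auto
qed

lemma ess_bounded_cnj: "ess_bounded M f \<Longrightarrow> ess_bounded M (\<lambda>x. cnj (f x))"
  unfolding ess_bounded_def by auto

lemma ess_bounded_sum:
  fixes f :: "'i \<Rightarrow> 'a \<Rightarrow> 'b::{real_normed_vector, second_countable_topology}"
  shows "(\<And>i. i \<in> I \<Longrightarrow> ess_bounded M (f i)) \<Longrightarrow> ess_bounded M (\<lambda>x. \<Sum>i\<in>I. f i x)"
  by (induction I rule: infinite_finite_induct) (auto intro: ess_bounded_add ess_bounded_const)

lemma (in finite_measure) integrable_if_ess_bounded:
  fixes f :: "'a \<Rightarrow> 'b::{banach, second_countable_topology}"
  shows "ess_bounded M f \<Longrightarrow> integrable M f"
  unfolding ess_bounded_def using integrable_const_bound by blast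

section \<open>Functions annihilated by all continuous functions\<close>

lemma tendsto_min_infdist_indicator:
  fixes U :: "'a::metric_space set"
  assumes "open U" "U \<noteq> UNIV"
  shows "(\<lambda>k. min 1 (real k * infdist x (- U))) \<longlonglongrightarrow> indicator U x"
proof (cases "x \<in> U")
  case True
  have d: "infdist x (- U) > 0"
    using True assms by (intro infdist_pos_not_in_closed) auto
  have "eventually (\<lambda>k. 1 / infdist x (- U) \<le> real k) sequentially"
    using filterlim_real_sequentially by (simp add: filterlim_at_top)
  then have "eventually (\<lambda>k. min 1 (real k * infdist x (- U)) = 1) sequentially"
    by eventually_elim (simp add: pos_divide_le_eq[OF d])
  then show ?thesis
    using True by (simp add: tendsto_eventually)
next
  case False
  then show ?thesis by simp
qed

lemma set_integral_open_eq_0_if_integral_continuous_eq_0: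
  fixes f :: "'a::metric_space \<Rightarrow> 'b::{banach, second_countable_topology}"
  assumes f: "integrable M f" and sets: "sets M = sets borel"
    and zero: "\<And>h. continuous_on UNIV h \<Longrightarrow> (\<And>x. 0 \<le> h x \<and> h x \<le> 1) \<Longrightarrow> (\<integral>x. h x *\<^sub>R f x \<partial>M) = 0"
    and U: "open U"
  shows "(LINT x:U|M. f x) = 0"
proof (cases "U = UNIV")
  case True
  then show ?thesis
    using zero[of "\<lambda>_. 1"] by (simp add: set_lebesgue_integral_def)
next
  case False
  define h where "h k x = min 1 (real k * infdist x (- U))" for k :: nat and x
  have h_cont: "continuous_on UNIV (h k)" for k
    unfolding h_def by (intro continuous_intros)
  have h_bounds: "0 \<le> h k x \<and> h k x \<le> 1" for k x
    unfolding h_def by (simp add: infdist_nonneg)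
  have borel_M: "borel_measurable M = borel_measurable borel"
    by (rule measurable_cong_sets[OF sets refl])
  have f_borel: "f \<in> borel_measurable borel"
    using borel_measurable_integrable[OF f] unfolding borel_M .
  have "(\<lambda>k. \<integral>x. h k x *\<^sub>R f x \<partial>M) \<longlonglongrightarrow> (\<integral>x. indicator U x *\<^sub>R f x \<partial>M)"
  proof (rule integral_dominated_convergence[where w="\<lambda>x. norm (f x)"])
    show "(\<lambda>x. h k x *\<^sub>R f x) \<in> borel_measurable M" for k
      using f_borel borel_measurable_continuous_onI[OF h_cont] unfolding borel_M by simp
    show "(\<lambda>x. indicator U x *\<^sub>R f x) \<in> borel_measurable M"
      using f_borel U unfolding borel_M by simp
    show "AE x in M. (\<lambda>k. h k x *\<^sub>R f x) \<longlonglongrightarrow> indicator U x *\<^sub>R f x"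
      unfolding h_def using U False by (intro AE_I2 tendsto_scaleR tendsto_min_infdist_indicator tendsto_const)
    show "AE x in M. norm (h k x *\<^sub>R f x) \<le> norm (f x)" for k
      using h_bounds[of k] by (intro AE_I2) (simp add: mult_left_le_one_le)
  qed (use f in simp)
  moreover have "(\<integral>x. h k x *\<^sub>R f x \<partial>M) = 0" for k
    using h_cont h_bounds by (rule zero)
  ultimately show ?thesis
    unfolding set_lebesgue_integral_def by (simp add: LIMSEQ_const_iff)
qed

lemma AE_eq_0_if_set_integral_open_eq_0:
  fixes f :: "'a::topological_space \<Rightarrow> 'b::{banach, second_countable_topology}"
  assumes M: "sigma_finite_measure M" and f: "integrable M f" and sets: "sets M = sets borel"
    and zero: "\<And>U. open U \<Longrightarrow> (LINT x:U|M. f x) = 0"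
  shows "AE x in M. f x = 0"
proof (rule sigma_finite_measure.density_zero[OF M f])
  have space: "space M = UNIV"
    using sets_eq_imp_space_eq[OF sets] by simp
  have set_integrable: "set_integrable M A f" if "A \<in> sets M" for A
    unfolding set_integrable_def using that f by (rule integrable_mult_indicator)
  have "Int_stable {S. open S}" "{S. open S} \<subseteq> Pow UNIV"
    by (auto simp: Int_stable_def)
  fix A assume "A \<in> sets M"
  then have "A \<in> sigma_sets UNIV {S. open S}"
    using sets by (simp add: sets_borel)
  with \<open>Int_stable {S. open S}\<close> \<open>{S. open S} \<subseteq> Pow UNIV\<close>
  show "(LINT x:A|M. f x) = 0"
  proof (induction rule: sigma_sets_induct_disjoint)
    case (basic A)
    then show ?case using zero by simp
  next
    case empty
    then show ?case by (simp add: set_lebesgue_integral_def)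
  next
    case (compl A)
    then have A: "A \<in> sets M" using sets by (simp add: sets_borel)
    have "(LINT x:A \<union> (UNIV - A)|M. f x) = (LINT x:A|M. f x) + (LINT x:UNIV - A|M. f x)"
      using A space sets.compl_sets[OF A] by (intro set_integral_Un set_integrable) auto
    then show ?case
      using compl.IH zero[of UNIV] by simp
  next
    case (union A)
    then have A: "A i \<in> sets M" for i using sets by (auto simp: sets_borel)
    have "(LINT x:(\<Union>i. A i)|M. f x) = (\<Sum>i. LINT x:A i|M. f x)"
      using union.hyps(1) A
      by (intro lebesgue_integral_countable_add set_integrable) (auto simp: disjoint_family_on_def)
    then show ?case using union.IH by simp
  qed
qed

section \<open>The unit circle\<close>

definition circle_measure :: "complex measure" where
  "circle_measure = distr (restrict_space lborel {0..2*pi}) borel cis"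

lemma measurable_cis_restrict: "cis \<in> measurable (restrict_space lborel {0..2*pi}) borel"
proof (rule measurable_restrict_space1)
  have "cis \<in> borel_measurable borel"
    by (rule borel_measurable_continuous_onI) (rule continuous_on_cis[OF continuous_on_id])
  then show "cis \<in> borel_measurable lborel" by simp
qed

lemma sets_circle_measure [measurable_cong, simp]: "sets circle_measure = sets borel"
  by (simp add: circle_measure_def)

lemma borel_measurable_circle_measure [simp]:
  "borel_measurable circle_measure = borel_measurable borel"
  by (rule measurable_cong_sets) simp_all

lemma space_circle_measure [simp]: "space circle_measure = UNIV"
  by (simp add: circle_measure_def)

lemma emeasure_circle_measure_UNIV: "emeasure circle_measure UNIV = 2 * pi"
  using measurable_cis_restrict
  by (simp add: circle_measure_def emeasure_distr emeasure_restrict_space space_restrict_space)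

interpretation circle_measure: finite_measure circle_measure
  by (rule finite_measureI) (simp add: emeasure_circle_measure_UNIV)

lemma measure_circle_measure_UNIV: "measure circle_measure UNIV = 2 * pi"
  by (simp add: measure_def emeasure_circle_measure_UNIV)

lemma integral_circle_measure:
  fixes f :: "complex \<Rightarrow> 'b::{banach, second_countable_topology}"
  assumes "f \<in> borel_measurable borel"
  shows "integral\<^sup>L circle_measure f = (LINT t:{0..2*pi}|lborel. f (cis t))"
  unfolding circle_measure_def set_lebesgue_integral_def
  by (simp add: integral_distr[OF measurable_cis_restrict assms] integral_restrict_space)

lemma AE_circle_measure_iff:
  assumes "{z. P z} \<in> sets borel"
  shows "(AE z in circle_measure. P z) \<longleftrightarrow> (AE t in lborel. t \<in> {0..2*pi} \<longrightarrow> P (cis t))"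
  unfolding circle_measure_def using assms
  by (simp add: AE_distr_iff[OF measurable_cis_restrict] AE_restrict_space_iff)

lemma AE_circle_measure_norm: "AE z in circle_measure. norm z = 1"
  by (subst AE_circle_measure_iff) auto

lemma cnj_power_int_unimodular:
  assumes "norm z = 1"
  shows "cnj (z powi n) = z powi (-n)"
proof -
  have "z * cnj z = 1"
    using assms complex_norm_square[of z] by simp
  then have "cnj z = inverse z"
    by (simp add: inverse_unique)
  then show ?thesis by (simp add: power_int_minus power_int_inverse)
qed

lemma integral_cis_power_int:
  "(LINT t:{0..2*pi}|lborel. cis t powi n) = (if n = 0 then 2*pi else 0)"
proof -
  have "set_integrable lborel {0..2*pi} (\<lambda>t. cis t powi n)"
    unfolding cis_power_int by (intro borel_integrable_atLeastAtMost') (intro continuous_intros)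
  then have e: "(LINT t:{0..2*pi}|lborel. cis t powi n) = integral {0..2*pi} (\<lambda>t. cis t powi n)"
    by (rule set_borel_integral_eq_integral(2))
  show ?thesis
  proof (cases "n = 0")
    case True
    then show ?thesis unfolding e by (simp add: scaleR_conv_of_real)
  next
    case False
    have "((\<lambda>t. cis (n * t) / (\<i> * n)) has_vector_derivative cis t powi n) (at t within {0..2*pi})" for t
    proof -
      have "((\<lambda>t. cis (n * t)) has_derivative (\<lambda>h. (real_of_int n * h) *\<^sub>R (\<i> * cis (n * t)))) (at t within {0..2*pi})"
        by (intro has_derivative_cis has_derivative_mult_right has_derivative_ident)
      then have "((\<lambda>t. cis (n * t) / (\<i> * n)) has_derivative (\<lambda>h. ((n * h) *\<^sub>R (\<i> * cis (n * t))) / (\<i> * n))) (at t within {0..2*pi})"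
        by (rule bounded_linear.has_derivative[OF bounded_linear_divide])
      moreover have "(\<lambda>h. ((real_of_int n * h) *\<^sub>R (\<i> * cis (n * t))) / (\<i> * n)) = (\<lambda>h. h *\<^sub>R cis t powi n)"
        using False by (auto simp: fun_eq_iff cis_power_int scaleR_conv_of_real field_simps)
      ultimately show ?thesis by (simp add: has_vector_derivative_def)
    qed
    then have "((\<lambda>t. cis t powi n) has_integral (cis (n * (2*pi)) / (\<i> * n) - cis (real_of_int n * 0) / (\<i> * n))) {0..2*pi}"
      by (intro fundamental_theorem_of_calculus) auto
    moreover have "cis (n * (2*pi)) = 1"
      using cis_multiple_2pi[of n] by (simp add: mult_ac)
    ultimately show ?thesis unfolding e using False by (simp add: integral_unique)
  qed
qed

lemma integral_circle_measure_power_int: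
  "integral\<^sup>L circle_measure (\<lambda>z. z powi n) = (if n = 0 then 2*pi else 0)"
  by (simp add: integral_circle_measure integral_cis_power_int)

lemma fourier_eq_integral_circle_measure:
  assumes "phi \<in> borel_measurable borel"
  shows "fourier phi n = integral\<^sup>L circle_measure (\<lambda>z. phi z * cnj (z powi n)) / (2 * pi)"
proof -
  have "(\<lambda>z. phi z * cnj (z powi n)) \<in> borel_measurable borel"
    using assms by measurable
  then show ?thesis by (simp add: fourier_def integral_circle_measure)
qed

lemma ess_bounded_circle_measure_power_int: "ess_bounded circle_measure (\<lambda>z. z powi n)"
  unfolding ess_bounded_def using AE_circle_measure_norm
  by (auto intro!: exI[of _ 1] simp: norm_power_int elim!: eventually_mono)

lemma ess_bounded_circle_measure_if_continuous:
  fixes h :: "complex \<Rightarrow> 'b::{real_normed_vector, second_countable_topology}"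
  assumes "continuous_on UNIV h"
  shows "ess_bounded circle_measure h"
proof -
  obtain B where B: "\<And>z. z \<in> sphere 0 1 \<Longrightarrow> norm (h z) \<le> B"
    using compact_imp_bounded[OF compact_continuous_image[OF continuous_on_subset[OF assms] compact_sphere]]
    unfolding bounded_iff by blast
  have "AE z in circle_measure. norm (h z) \<le> B"
    using AE_circle_measure_norm by eventually_elim (simp add: B)
  then show ?thesis
    unfolding ess_bounded_def using borel_measurable_continuous_onI[OF assms] by auto
qed

lemma ess_bounded_circle_measure_if_Linf: "Linf phi \<Longrightarrow> ess_bounded circle_measure phi"
  unfolding Linf_def ess_bounded_def by (subst AE_circle_measure_iff) auto

section \<open>Bessel's inequality\<close>

definition circle_inner :: "(complex \<Rightarrow> complex) \<Rightarrow> (complex \<Rightarrow> complex) \<Rightarrow> complex" where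
  "circle_inner f g = (\<integral>z. f z * cnj (g z) \<partial>circle_measure)"

lemma fourier_eq_circle_inner:
  "phi \<in> borel_measurable borel \<Longrightarrow> fourier phi n = circle_inner phi (\<lambda>z. z powi n) / (2 * pi)"
  unfolding circle_inner_def by (rule fourier_eq_integral_circle_measure)

lemma circle_inner_power_int:
  "circle_inner (\<lambda>z. z powi n) (\<lambda>z. z powi m) = (if n = m then 2 * pi else 0)"
proof -
  have "AE z in circle_measure. z powi n * cnj (z powi m) = z powi (n - m)"
    using AE_circle_measure_norm
  proof eventually_elim
    case (elim z)
    then have "z \<noteq> 0" by auto
    have "z powi n * cnj (z powi m) = z powi n * z powi (-m)"
      by (simp only: cnj_power_int_unimodular[OF elim])
    also have "\<dots> = z powi (n - m)"
      by (metis power_int_add diff_conv_add_uminus \<open>z \<noteq> 0\<close>)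
    finally show ?case .
  qed
  then have "circle_inner (\<lambda>z. z powi n) (\<lambda>z. z powi m) = integral\<^sup>L circle_measure (\<lambda>z. z powi (n - m))"
    unfolding circle_inner_def by (rule integral_cong_AE[rotated 2]) measurable
  then show ?thesis by (simp add: integral_circle_measure_power_int)
qed

lemma circle_inner_commute: "circle_inner g f = cnj (circle_inner f g)"
  unfolding circle_inner_def by (simp add: Bochner_Integration.integral_cnj[symmetric] mult.commute)

lemma circle_inner_diff_left:
  assumes "ess_bounded circle_measure f" "ess_bounded circle_measure g" "ess_bounded circle_measure h"
  shows "circle_inner (\<lambda>z. f z - g z) h = circle_inner f h - circle_inner g h"
  unfolding circle_inner_def left_diff_distrib using assms
  by (intro Bochner_Integration.integral_diff circle_measure.integrable_if_ess_bounded
      ess_bounded_mult ess_bounded_cnj)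

lemma circle_inner_diff_right:
  assumes "ess_bounded circle_measure f" "ess_bounded circle_measure g" "ess_bounded circle_measure h"
  shows "circle_inner f (\<lambda>z. g z - h z) = circle_inner f g - circle_inner f h"
  using circle_inner_diff_left[OF assms(2,3,1)] by (simp add: circle_inner_commute[of f])

lemma circle_inner_sum_left:
  assumes "\<And>i. i \<in> I \<Longrightarrow> ess_bounded circle_measure (f i)" "ess_bounded circle_measure g"
  shows "circle_inner (\<lambda>z. \<Sum>i\<in>I. c i * f i z) g = (\<Sum>i\<in>I. c i * circle_inner (f i) g)"
  unfolding circle_inner_def sum_distrib_right using assms
  by (subst Bochner_Integration.integral_sum)
     (auto simp: mult.assoc intro!: circle_measure.integrable_if_ess_bounded ess_bounded_mult
        ess_bounded_cnj ess_bounded_const)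

lemma circle_inner_sum_right:
  assumes "ess_bounded circle_measure f" "\<And>i. i \<in> I \<Longrightarrow> ess_bounded circle_measure (g i)"
  shows "circle_inner f (\<lambda>z. \<Sum>i\<in>I. c i * g i z) = (\<Sum>i\<in>I. cnj (c i) * circle_inner f (g i))"
  using circle_inner_sum_left[OF assms(2,1), where c=c] by (simp add: circle_inner_commute[of f])

lemma Re_circle_inner_self:
  assumes "ess_bounded circle_measure f"
  shows "Re (circle_inner f f) = (\<integral>z. (norm (f z))\<^sup>2 \<partial>circle_measure)"
proof -
  have "Re (circle_inner f f) = (\<integral>z. Re (f z * cnj (f z)) \<partial>circle_measure)"
    unfolding circle_inner_def using assms
    by (intro integral_Re[symmetric] circle_measure.integrable_if_ess_bounded ess_bounded_mult
        ess_bounded_cnj)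
  then show ?thesis
    by (simp only: complex_norm_square[symmetric] Re_complex_of_real)
qed

lemma circle_inner_fourier_partial_sum:
  assumes phi: "ess_bounded circle_measure phi" and S: "finite S"
  defines "P \<equiv> \<lambda>z. \<Sum>n\<in>S. fourier phi n * z powi n"
  shows "circle_inner phi P = complex_of_real (2 * pi * (\<Sum>n\<in>S. (norm (fourier phi n))\<^sup>2))"
    and "circle_inner P P = complex_of_real (2 * pi * (\<Sum>n\<in>S. (norm (fourier phi n))\<^sup>2))"
proof -
  have pow: "ess_bounded circle_measure (\<lambda>z. z powi n)" for n
    by (rule ess_bounded_circle_measure_power_int)
  have P: "ess_bounded circle_measure P"
    unfolding P_def by (intro ess_bounded_sum ess_bounded_mult ess_bounded_const pow)
  have coeff: "circle_inner phi (\<lambda>z. z powi n) = 2 * pi * fourier phi n" for n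
    using phi fourier_eq_circle_inner[of phi n] by (simp add: ess_bounded_def field_simps)
  have sum_eq: "(\<Sum>n\<in>S. cnj (fourier phi n) * (2 * pi * fourier phi n)) =
      complex_of_real (2 * pi * (\<Sum>n\<in>S. (norm (fourier phi n))\<^sup>2))"
  proof -
    have sq: "cnj w * (c * w) = c * complex_of_real ((norm w)\<^sup>2)" for w c :: complex
      by (metis complex_norm_square mult.commute mult.left_commute)
    show ?thesis
      unfolding of_real_sum sum_distrib_left by (simp only: sq of_real_mult)
  qed
  have "circle_inner phi P = (\<Sum>n\<in>S. cnj (fourier phi n) * (2 * pi * fourier phi n))"
    unfolding P_def using phi pow by (simp add: circle_inner_sum_right coeff)
  then show "circle_inner phi P = complex_of_real (2 * pi * (\<Sum>n\<in>S. (norm (fourier phi n))\<^sup>2))"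
    by (simp only: sum_eq)
  have "circle_inner P P = (\<Sum>n\<in>S. fourier phi n * circle_inner (\<lambda>z. z powi n) P)"
    using circle_inner_sum_left[of S "\<lambda>n z. z powi n" P "fourier phi", folded P_def] P pow by simp
  also have "\<dots> = (\<Sum>n\<in>S. fourier phi n *
      (\<Sum>m\<in>S. cnj (fourier phi m) * circle_inner (\<lambda>z. z powi n) (\<lambda>z. z powi m)))"
    unfolding P_def by (simp add: circle_inner_sum_right pow)
  also have "\<dots> = (\<Sum>n\<in>S. cnj (fourier phi n) * (2 * pi * fourier phi n))"
    using S by (intro sum.cong refl) (simp add: circle_inner_power_int if_distrib mult_ac cong: if_cong)
  finally show "circle_inner P P = complex_of_real (2 * pi * (\<Sum>n\<in>S. (norm (fourier phi n))\<^sup>2))"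
    by (simp only: sum_eq)
qed

lemma bessel_inequality:
  assumes phi: "ess_bounded circle_measure phi"
    and C: "AE z in circle_measure. norm (phi z) \<le> C" and S: "finite S"
  shows "(\<Sum>n\<in>S. (norm (fourier phi n))\<^sup>2) \<le> C\<^sup>2"
proof -
  define P where "P = (\<lambda>z. \<Sum>n\<in>S. fourier phi n * z powi n)"
  define \<sigma> where "\<sigma> = (\<Sum>n\<in>S. (norm (fourier phi n))\<^sup>2)"
  have P: "ess_bounded circle_measure P"
    unfolding P_def
    by (intro ess_bounded_sum ess_bounded_mult ess_bounded_const ess_bounded_circle_measure_power_int)
  note partial_sum = circle_inner_fourier_partial_sum[OF phi S, folded P_def \<sigma>_def]
  have "0 \<le> Re (circle_inner (\<lambda>z. phi z - P z) (\<lambda>z. phi z - P z))"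
    using phi P by (simp add: Re_circle_inner_self ess_bounded_diff)
  also have "\<dots> = Re (circle_inner phi phi) - 2 * pi * \<sigma>"
    using phi P
    by (simp add: circle_inner_diff_left circle_inner_diff_right ess_bounded_diff partial_sum
        circle_inner_commute[of P phi])
  finally have "2 * pi * \<sigma> \<le> Re (circle_inner phi phi)" by simp
  also have "\<dots> \<le> (\<integral>z. C\<^sup>2 \<partial>circle_measure)"
  proof -
    have "AE z in circle_measure. (norm (phi z))\<^sup>2 \<le> C\<^sup>2"
      using C by eventually_elim (simp add: power_mono)
    with phi show ?thesis
      unfolding Re_circle_inner_self[OF phi]
      by (intro integral_mono_AE circle_measure.integrable_if_ess_bounded)
        (auto simp: ess_bounded_def)
  qed
  finally show ?thesis
    by (simp add: measure_circle_measure_UNIV \<sigma>_def)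
qed

lemma eq_0_if_level_set_infinite_and_square_sums_bounded:
  fixes a :: "'a \<Rightarrow> 'b::real_normed_vector"
  assumes bounded: "\<And>S. finite S \<Longrightarrow> (\<Sum>n\<in>S. (norm (a n))\<^sup>2) \<le> B"
    and infinite: "infinite {n. norm (a n) = norm (a x)}"
  shows "a x = 0"
proof (rule ccontr)
  assume "a x \<noteq> 0"
  then have c: "(norm (a x))\<^sup>2 > 0" by simp
  obtain N :: nat where N: "B / (norm (a x))\<^sup>2 < N" using reals_Archimedean2 by blast
  obtain S where S: "finite S" "card S = N" "S \<subseteq> {n. norm (a n) = norm (a x)}"
    using infinite_arbitrarily_large[OF infinite] by blast
  then have "(\<Sum>n\<in>S. (norm (a n))\<^sup>2) = (\<Sum>n\<in>S. (norm (a x))\<^sup>2)"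
    by (intro sum.cong) auto
  also have "\<dots> = N * (norm (a x))\<^sup>2" using S by simp
  finally have "(\<Sum>n\<in>S. (norm (a n))\<^sup>2) = N * (norm (a x))\<^sup>2" .
  with bounded[OF \<open>finite S\<close>] N c show False by (simp add: divide_less_eq)
qed

section \<open>Uniqueness of Fourier coefficients\<close>

(* Repeated exponents are allowed, so that products need no regrouping. *)
definition trig_poly :: "(complex \<times> int) list \<Rightarrow> complex \<Rightarrow> complex" where
  "trig_poly cs z = (\<Sum>(c, n)\<leftarrow>cs. c * z powi n)"

lemma trig_poly_Nil [simp]: "trig_poly [] z = 0"
  by (simp add: trig_poly_def)

lemma trig_poly_Cons [simp]: "trig_poly ((c, n) # cs) z = c * z powi n + trig_poly cs z"
  by (simp add: trig_poly_def)

lemma trig_poly_append [simp]: "trig_poly (cs @ ds) z = trig_poly cs z + trig_poly ds z"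
  by (simp add: trig_poly_def)

lemma trig_poly_mult:
  assumes "z \<noteq> 0"
  shows "trig_poly [(c * d, n + m). (c, n) \<leftarrow> cs, (d, m) \<leftarrow> ds] z = trig_poly cs z * trig_poly ds z"
proof (induction cs)
  case (Cons cn cs)
  obtain c n where [simp]: "cn = (c, n)" by fastforce
  have "trig_poly [(c * d, n + m). (d, m) \<leftarrow> ds] z = c * z powi n * trig_poly ds z"
    by (induction ds) (auto simp: power_int_add assms algebra_simps)
  with Cons show ?case by (simp add: algebra_simps)
qed simp

lemma real_polynomial_function_on_circle_eq_trig_poly:
  assumes "real_polynomial_function p"
  shows "\<exists>cs. \<forall>z. norm z = 1 \<longrightarrow> complex_of_real (p z) = trig_poly cs z"
  using assms
proof (induction p rule: real_polynomial_function.induct)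
  case (linear f)
  have f: "f z = Re z * f 1 + Im z * f \<i>" for z
  proof -
    have "f z = f (Re z *\<^sub>R 1 + Im z *\<^sub>R \<i>)"
      by (rule arg_cong[where f = f]) (simp add: complex_eq_iff)
    also have "\<dots> = Re z * f 1 + Im z * f \<i>"
      using linear.hyps by (simp add: linear_simps)
    finally show ?thesis .
  qed
  define cs where "cs = [((f 1 - \<i> * f \<i>) / 2, 1), ((f 1 + \<i> * f \<i>) / 2, -1::int)]"
  have "complex_of_real (f z) = trig_poly cs z" if "norm z = 1" for z
  proof -
    have "z * cnj z = 1"
      using that complex_norm_square[of z] by simp
    then have "z powi -1 = cnj z"
      by (simp add: power_int_minus inverse_unique)
    then have "trig_poly cs z = (f 1 - \<i> * f \<i>) / 2 * z + (f 1 + \<i> * f \<i>) / 2 * cnj z"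
      by (simp add: cs_def)
    also have "\<dots> = f 1 * ((z + cnj z) / 2) + f \<i> * ((z - cnj z) / (2 * \<i>))"
      by (simp add: field_simps)
    also have "\<dots> = complex_of_real (f z)"
      by (simp only: f[of z] of_real_add of_real_mult complex_add_cnj complex_diff_cnj)
        (simp add: field_simps)
    finally show ?thesis ..
  qed
  then show ?case by blast
next
  case (const c)
  show ?case by (rule exI[of _ "[(complex_of_real c, 0)]"]) simp
next
  case (add f g)
  then obtain cs ds where "\<forall>z. norm z = 1 \<longrightarrow> complex_of_real (f z) = trig_poly cs z"
    "\<forall>z. norm z = 1 \<longrightarrow> complex_of_real (g z) = trig_poly ds z" by blast
  then show ?case by (intro exI[of _ "cs @ ds"]) simp
next
  case (mult f g)
  then obtain cs ds where cs: "\<And>z. norm z = 1 \<Longrightarrow> complex_of_real (f z) = trig_poly cs z"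
    and ds: "\<And>z. norm z = 1 \<Longrightarrow> complex_of_real (g z) = trig_poly ds z" by blast
  have "complex_of_real (f z * g z) = trig_poly [(c * d, n + m). (c, n) \<leftarrow> cs, (d, m) \<leftarrow> ds] z"
    if "norm z = 1" for z
  proof -
    have "z \<noteq> 0" using that by auto
    then show ?thesis using cs[OF that] ds[OF that] by (simp add: trig_poly_mult)
  qed
  then show ?case by blast
qed

lemma ess_bounded_trig_poly: "ess_bounded circle_measure (trig_poly cs)"
proof (induction cs)
  case Nil
  then show ?case using ess_bounded_const[of _ 0] by simp
next
  case (Cons cn cs)
  obtain c n where [simp]: "cn = (c, n)" by fastforce
  have "ess_bounded circle_measure (\<lambda>z. c * z powi n + trig_poly cs z)"
    by (intro ess_bounded_add ess_bounded_mult ess_bounded_const ess_bounded_circle_measure_power_int Cons)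
  then show ?case by simp
qed

lemma integral_mult_power_int_eq_fourier:
  assumes "ess_bounded circle_measure phi"
  shows "(\<integral>z. phi z * z powi n \<partial>circle_measure) = 2 * pi * fourier phi (-n)"
proof -
  have "AE z in circle_measure. phi z * z powi n = phi z * cnj (z powi (-n))"
    using AE_circle_measure_norm
    by eventually_elim (simp add: cnj_power_int_unimodular del: complex_cnj_power_int)
  then have "(\<integral>z. phi z * z powi n \<partial>circle_measure) = circle_inner phi (\<lambda>z. z powi (-n))"
    unfolding circle_inner_def using assms
    by (intro integral_cong_AE) (auto simp: ess_bounded_def)
  then show ?thesis
    using assms fourier_eq_circle_inner[of phi "-n"] by (simp add: ess_bounded_def)
qed

lemma integral_mult_trig_poly_eq_0_if_fourier_eq_0:
  assumes phi: "ess_bounded circle_measure phi" and zero: "\<And>n. fourier phi n = 0"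
  shows "(\<integral>z. phi z * trig_poly cs z \<partial>circle_measure) = 0"
proof (induction cs)
  case (Cons cn cs)
  obtain c n where [simp]: "cn = (c, n)" by fastforce
  have "(\<integral>z. phi z * trig_poly (cn # cs) z \<partial>circle_measure) =
      c * (\<integral>z. phi z * z powi n \<partial>circle_measure) + (\<integral>z. phi z * trig_poly cs z \<partial>circle_measure)"
    using phi
    by (simp add: distrib_left mult.left_commute circle_measure.integrable_if_ess_bounded
        ess_bounded_mult ess_bounded_trig_poly ess_bounded_circle_measure_power_int)
  with Cons show ?case
    using phi by (simp add: integral_mult_power_int_eq_fourier zero)
qed simp

lemma trig_poly_approx_continuous:
  fixes h :: "complex \<Rightarrow> real"
  assumes "continuous_on UNIV h" and "d > 0"
  shows "\<exists>cs. \<forall>z. norm z = 1 \<longrightarrow> norm (complex_of_real (h z) - trig_poly cs z) < d"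
proof -
  obtain p where p: "polynomial_function p" and hp: "\<forall>z \<in> sphere 0 1. norm (h z - p z) < d"
    using Stone_Weierstrass_polynomial_function[OF compact_sphere
        continuous_on_subset[OF assms(1) subset_UNIV] assms(2)]
    by blast
  obtain cs where cs: "\<And>z. norm z = 1 \<Longrightarrow> complex_of_real (p z) = trig_poly cs z"
    using real_polynomial_function_on_circle_eq_trig_poly[OF p[folded real_polynomial_function_eq]]
    by blast
  have "norm (complex_of_real (h z) - trig_poly cs z) < d" if "norm z = 1" for z
    using hp that cs[OF that, symmetric] by (simp flip: of_real_diff)
  then show ?thesis by blast
qed

lemma norm_integral_continuous_mult_le_if_fourier_eq_0:
  fixes h :: "complex \<Rightarrow> real"
  assumes phi: "ess_bounded circle_measure phi" and zero: "\<And>n. fourier phi n = 0"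
    and h: "continuous_on UNIV h" and "d > 0"
  shows "norm (\<integral>z. h z *\<^sub>R phi z \<partial>circle_measure) \<le> d * (\<integral>z. norm (phi z) \<partial>circle_measure)"
proof -
  obtain cs where cs: "\<And>z. norm z = 1 \<Longrightarrow> norm (complex_of_real (h z) - trig_poly cs z) < d"
    using trig_poly_approx_continuous[OF h \<open>d > 0\<close>] by blast
  define g where "g z = complex_of_real (h z) - trig_poly cs z" for z
  have integrable: "integrable circle_measure f" if "ess_bounded circle_measure f" for f :: "complex \<Rightarrow> complex"
    using that by (rule circle_measure.integrable_if_ess_bounded)
  have h_bounded: "ess_bounded circle_measure (\<lambda>z. complex_of_real (h z))"
    using h by (intro ess_bounded_circle_measure_if_continuous continuous_intros)
  have g: "ess_bounded circle_measure g"
    unfolding g_def by (intro ess_bounded_diff h_bounded ess_bounded_trig_poly)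
  have "(\<integral>z. h z *\<^sub>R phi z \<partial>circle_measure) =
      (\<integral>z. complex_of_real (h z) * phi z \<partial>circle_measure) - (\<integral>z. phi z * trig_poly cs z \<partial>circle_measure)"
    using phi zero by (simp add: integral_mult_trig_poly_eq_0_if_fourier_eq_0 scaleR_conv_of_real)
  also have "\<dots> = (\<integral>z. complex_of_real (h z) * phi z - phi z * trig_poly cs z \<partial>circle_measure)"
    using phi h_bounded
    by (intro Bochner_Integration.integral_diff[symmetric] integrable ess_bounded_mult ess_bounded_trig_poly)
  also have "\<dots> = (\<integral>z. g z * phi z \<partial>circle_measure)"
    unfolding g_def by (simp add: left_diff_distrib right_diff_distrib mult.commute)
  finally have "norm (\<integral>z. h z *\<^sub>R phi z \<partial>circle_measure) \<le> (\<integral>z. norm (g z * phi z) \<partial>circle_measure)"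
    using integral_norm_bound by simp
  also have "\<dots> \<le> (\<integral>z. d * norm (phi z) \<partial>circle_measure)"
  proof (rule integral_mono_AE)
    show "integrable circle_measure (\<lambda>z. norm (g z * phi z))"
      using g phi by (intro integrable_norm integrable ess_bounded_mult)
    show "integrable circle_measure (\<lambda>z. d * norm (phi z))"
      using phi by (intro integrable_mult_right integrable_norm integrable)
    show "AE z in circle_measure. norm (g z * phi z) \<le> d * norm (phi z)"
      using AE_circle_measure_norm
    proof eventually_elim
      case (elim z)
      then have "norm (g z) \<le> d"
        using cs[OF elim] by (simp add: g_def)
      then show ?case
        by (simp add: norm_mult mult_right_mono)
    qed
  qed
  finally show ?thesis by simp
qed

lemma integral_continuous_mult_eq_0_if_fourier_eq_0:
  fixes h :: "complex \<Rightarrow> real"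
  assumes phi: "ess_bounded circle_measure phi" and zero: "\<And>n. fourier phi n = 0"
    and h: "continuous_on UNIV h"
  shows "(\<integral>z. h z *\<^sub>R phi z \<partial>circle_measure) = 0"
proof -
  define L where "L = (\<integral>z. norm (phi z) \<partial>circle_measure)"
  have "L \<ge> 0" unfolding L_def by simp
  have "norm (\<integral>z. h z *\<^sub>R phi z \<partial>circle_measure) \<le> 0 + e" if "e > 0" for e
  proof -
    have "norm (\<integral>z. h z *\<^sub>R phi z \<partial>circle_measure) \<le> e / (L + 1) * L"
      using \<open>L \<ge> 0\<close> \<open>e > 0\<close>
      by (intro norm_integral_continuous_mult_le_if_fourier_eq_0[OF phi zero h, folded L_def]) simp
    also have "\<dots> \<le> e / (L + 1) * (L + 1)"
      using \<open>L \<ge> 0\<close> \<open>e > 0\<close> by (intro mult_left_mono) auto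
    also have "\<dots> = e"
      using \<open>L \<ge> 0\<close> by simp
    finally show ?thesis by simp
  qed
  then have "norm (\<integral>z. h z *\<^sub>R phi z \<partial>circle_measure) \<le> 0"
    by (rule field_le_epsilon)
  then show ?thesis by simp
qed

lemma AE_circle_measure_eq_0_if_fourier_eq_0:
  assumes phi: "ess_bounded circle_measure phi" and zero: "\<And>n. fourier phi n = 0"
  shows "AE z in circle_measure. phi z = 0"
proof (rule AE_eq_0_if_set_integral_open_eq_0)
  show "integrable circle_measure phi"
    using phi by (rule circle_measure.integrable_if_ess_bounded)
  then show "(LINT z:U|circle_measure. phi z) = 0" if "open U" for U
    using that
    by (intro set_integral_open_eq_0_if_integral_continuous_eq_0
        integral_continuous_mult_eq_0_if_fourier_eq_0[OF phi zero]) simp_all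
qed (simp_all add: circle_measure.sigma_finite_measure_axioms)

section \<open>Slant H-Toeplitz operators on the standard basis\<close>

lemma infsum_eq_single:
  fixes f :: "'a \<Rightarrow> 'b::{comm_monoid_add, t2_space}"
  assumes "\<And>n. n \<noteq> j \<Longrightarrow> f n = 0"
  shows "(\<Sum>\<^sub>\<infinity>n. f n) = f j"
proof -
  have "(\<Sum>\<^sub>\<infinity>n. f n) = infsum f {j}"
    by (rule infsum_cong_neutral) (use assms in auto)
  then show ?thesis by simp
qed

definition unit_vec :: "int \<Rightarrow> int \<Rightarrow> complex" where
  "unit_vec j = (\<lambda>n. if n = j then 1 else 0)"

lemma unit_vec_in_H2: "j \<ge> 0 \<Longrightarrow> unit_vec j \<in> H2"
  unfolding H2_def l2_def unit_vec_def
  by (auto intro!: finite_nonzero_values_imp_summable_on)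

lemma l2_inner_unit_vec_right: "l2_inner f (unit_vec j) = f j"
  unfolding l2_inner_def by (subst infsum_eq_single[where j=j]) (auto simp: unit_vec_def)

lemma l2_inner_unit_vec_left: "l2_inner (unit_vec j) f = cnj (f j)"
  unfolding l2_inner_def by (subst infsum_eq_single[where j=j]) (auto simp: unit_vec_def)

lemma slant_HT_unit_vec_even:
  assumes "n \<ge> 0"
  shows "slant_HT phi (unit_vec (2*n)) = (\<lambda>i. if i \<ge> 0 then fourier phi (2*i - n) else 0)"
proof -
  have K: "Kop (unit_vec (2*n)) = unit_vec n"
    using assms unfolding Kop_def unit_vec_def by (auto simp: fun_eq_iff) presburger
  have M: "Mult phi (unit_vec n) = (\<lambda>i. fourier phi (i - n))"
    unfolding Mult_def by (rule ext, subst infsum_eq_single[where j=n]) (auto simp: unit_vec_def)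
  show ?thesis
    unfolding slant_HT_def K M by (simp add: Wop_def Proj_def fun_eq_iff)
qed

lemma fourier_symmetry_if_selfadjoint:
  assumes "selfadjoint_on_H2 (slant_HT phi)" "m \<ge> 0" "n \<ge> 0"
  shows "fourier phi (4*m - n) = cnj (fourier phi (4*n - m))"
proof -
  have "l2_inner (slant_HT phi (unit_vec (2*n))) (unit_vec (2*m)) =
        l2_inner (unit_vec (2*n)) (slant_HT phi (unit_vec (2*m)))"
    using assms unit_vec_in_H2[of "2*n"] unit_vec_in_H2[of "2*m"]
    unfolding selfadjoint_on_H2_def by auto
  then show ?thesis
    using assms by (simp add: l2_inner_unit_vec_left l2_inner_unit_vec_right slant_HT_unit_vec_even)
qed

lemma infinite_norm_fourier_level_set_if_selfadjoint:
  assumes "selfadjoint_on_H2 (slant_HT phi)"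
  shows "infinite {n. norm (fourier phi n) = norm (fourier phi x)}"
proof
  assume fin: "finite {n. norm (fourier phi n) = norm (fourier phi x)}"
  define b where "b = Max {n. norm (fourier phi n) = norm (fourier phi x)}"
  have b: "n \<le> b" if "norm (fourier phi n) = norm (fourier phi x)" for n
    unfolding b_def using fin that by (simp add: Max_ge)
  define m where "m = \<bar>x\<bar> + \<bar>b\<bar> + 1"
  have "fourier phi (4*m - (4*m - x)) = cnj (fourier phi (4*(4*m - x) - m))"
    by (rule fourier_symmetry_if_selfadjoint[OF assms]) (auto simp: m_def)
  then have "norm (fourier phi (15*m - 4*x)) = norm (fourier phi x)"
    by (simp add: algebra_simps)
  then have "15*m - 4*x \<le> b" by (rule b)
  then show False by (simp add: m_def)
qed

lemma slant_HT_eq_0_if_fourier_eq_0: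
  assumes "\<And>n. fourier phi n = 0"
  shows "slant_HT phi f = (\<lambda>_. 0)"
  unfolding slant_HT_def Mult_def Wop_def Proj_def by (simp add: assms fun_eq_iff)

lemma fourier_eq_0_if_selfadjoint:
  assumes "Linf phi" and "selfadjoint_on_H2 (slant_HT phi)"
  shows "fourier phi n = 0"
proof -
  have phi: "ess_bounded circle_measure phi"
    using assms(1) by (rule ess_bounded_circle_measure_if_Linf)
  then obtain C where C: "AE z in circle_measure. norm (phi z) \<le> C"
    unfolding ess_bounded_def by blast
  show ?thesis
    by (rule eq_0_if_level_set_infinite_and_square_sums_bounded[OF bessel_inequality[OF phi C]
          infinite_norm_fourier_level_set_if_selfadjoint[OF assms(2)]])
qed

lemma fourier_eq_0_if_AE_eq_0:
  assumes "phi \<in> borel_measurable borel" and "AE z in circle_measure. phi z = 0"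
  shows "fourier phi n = 0"
proof -
  have "AE z in circle_measure. phi z * cnj (z powi n) = 0"
    using assms(2) by eventually_elim simp
  then show ?thesis
    using assms(1) by (simp add: fourier_eq_integral_circle_measure integral_eq_zero_AE)
qed

theorem mainTheorem11:
  fixes phi :: "complex \<Rightarrow> complex"
  assumes "Linf phi"
  shows "selfadjoint_on_H2 (slant_HT phi) \<longleftrightarrow>
         (AE t in lborel. t \<in> {0..2*pi} \<longrightarrow> phi (cis t) = 0)"
proof -
  have phi: "ess_bounded circle_measure phi"
    using assms by (rule ess_bounded_circle_measure_if_Linf)
  then have [measurable]: "phi \<in> borel_measurable borel"
    by (simp add: ess_bounded_def)
  have AE_iff: "(AE t in lborel. t \<in> {0..2*pi} \<longrightarrow> phi (cis t) = 0) \<longleftrightarrow>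
      (AE z in circle_measure. phi z = 0)"
    by (rule AE_circle_measure_iff[symmetric]) measurable
  show ?thesis
  proof
    assume "selfadjoint_on_H2 (slant_HT phi)"
    then have "fourier phi n = 0" for n
      using assms by (intro fourier_eq_0_if_selfadjoint)
    then show "AE t in lborel. t \<in> {0..2*pi} \<longrightarrow> phi (cis t) = 0"
      unfolding AE_iff by (rule AE_circle_measure_eq_0_if_fourier_eq_0[OF phi])
  next
    assume "AE t in lborel. t \<in> {0..2*pi} \<longrightarrow> phi (cis t) = 0"
    then have "fourier phi n = 0" for n
      unfolding AE_iff by (intro fourier_eq_0_if_AE_eq_0) measurable
    then show "selfadjoint_on_H2 (slant_HT phi)"
      unfolding selfadjoint_on_H2_def by (simp add: slant_HT_eq_0_if_fourier_eq_0 l2_inner_def)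
  qed
qed

end
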